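(* Let $q\in\mathbb{C}^*$ with $|q|>1$, let $R$ be a meromorphic function on $\mathbb{C}^*$, and let $\rho>0$. Then the equation $y(qx)=y(x)+R(x)$ admits a meromorphic solution on $\mathbb{C}^*$ whose poles are located at the elements of: $q^{\mathbb{Z}}$ with order at most $1$; $aq^{\mathbb{N}^*}$ with order $\mu_{R,a}$ for every $a\in\mathcal{P}^*_{R,>\rho}$; $aq^{-\mathbb{N}}$ with order $\mu_{R,a}$ for every $a\in\mathcal{P}^*_{R,\leq\rho}$.
   Context: $q^{\mathbb{Z}}=\{q^n:n\in\mathbb{Z}\}$, $aq^{\mathbb{N}^*}=\{aq^n:n\geq1\}$, $aq^{-\mathbb{N}}=\{aq^{-n}:n\geq0\}$. $\mathcal{P}^*_{R,\leq\rho}$ (resp. $\mathcal{P}^*_{R,>\rho}$) is the set of poles $a\neq0$ of $R$ with $|a|\leq\rho$ (resp. $|a|>\rho$), and $\mu_{R,a}$ is the order of the pole $a$ of $R$. *)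

theory Defs
  imports "HOL-Complex_Analysis.Complex_Analysis"
begin

text \<open>Order of a pole a of f (the paper's mu_{f,a}); for a pole, zorder f a is negative.\<close>
definition pole_order :: "(complex \<Rightarrow> complex) \<Rightarrow> complex \<Rightarrow> int" where
  "pole_order f a = - zorder f a"

definition poles_le :: "(complex \<Rightarrow> complex) \<Rightarrow> real \<Rightarrow> complex set" where
  "poles_le R \<rho> = {a. a \<noteq> 0 \<and> is_pole R a \<and> norm a \<le> \<rho>}"

definition poles_gt :: "(complex \<Rightarrow> complex) \<Rightarrow> real \<Rightarrow> complex set" where
  "poles_gt R \<rho> = {a. a \<noteq> 0 \<and> is_pole R a \<and> norm a > \<rho>}"

end

theory Submission
  imports Defs
begin

text \<open>
  Choose a pole-free annulus \<open>\<rho> < |x| < b\<close> of \<open>R\<close> and split \<open>R = f + g\<close> there by Cauchy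
  integrals over two circles: \<open>f\<close> is meromorphic on \<open>\<complex>\<close>, holomorphic and Lipschitz near \<open>0\<close>,
  and carries the poles of \<open>R\<close> with \<open>|a| > \<rho>\<close>; \<open>g\<close> is meromorphic on \<open>\<complex>\<^sup>*\<close>, \<open>O(1/x)\<close> at
  infinity, and carries the poles with \<open>|a| \<le> \<rho>\<close>. The series
  \<open>Y\<^sub>f(x) = \<Sum>\<^sub>n\<^sub>\<ge>\<^sub>1 (f(x/q\<^sup>n) - f(0))\<close> and \<open>Y\<^sub>g(x) = -\<Sum>\<^sub>n\<^sub>\<ge>\<^sub>0 g(q\<^sup>n x)\<close> converge locally
  uniformly away from their poles and solve the equation with right-hand sides \<open>f - f(0)\<close> and
  \<open>g\<close>; the constant \<open>f(0)\<close> is absorbed by the same construction applied to \<open>1/(1 - x)\<close>,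
  whose poles lie on \<open>q\<^sup>\<int>\<close>. Near any point only finitely many terms of each series are singular,
  so the poles of \<open>Y\<^sub>f\<close> sit at \<open>a q\<^sup>n\<close> (\<open>n \<ge> 1\<close>) and those of \<open>Y\<^sub>g\<close> at \<open>a q\<^sup>-\<^sup>n\<close> (\<open>n \<ge> 0\<close>), with
  order at most that of \<open>R\<close> at \<open>a\<close>.
\<close>

text \<open>
  It is
  phrased via expansions rather than \<^const>\<open>zorder\<close> because it must survive sums, where
  cancellation can raise the order.
\<close>
definition order_bounded_below :: "(complex \<Rightarrow> complex) \<Rightarrow> complex \<Rightarrow> int set \<Rightarrow> bool" where
  "order_bounded_below h z V \<longleftrightarrow> (\<exists>F. (\<lambda>w. h (z + w)) has_laurent_expansion F \<and>
      (0 \<le> fls_subdegree F \<or> (\<exists>v\<in>V. v \<le> fls_subdegree F)))"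

lemma order_bounded_below_analytic:
  assumes "h analytic_on {z}"
  shows "order_bounded_below h z V"
proof -
  obtain F where "(\<lambda>w. h (z + w)) has_fps_expansion F"
    using analytic_at_imp_has_fps_expansion[OF assms] by blast
  then have "(\<lambda>w. h (z + w)) has_laurent_expansion fps_to_fls F"
    by (rule has_laurent_expansion_fps)
  then show ?thesis
    unfolding order_bounded_below_def by (auto simp: fls_subdegree_fls_to_fps)
qed

lemma order_bounded_below_add:
  assumes "order_bounded_below h z V" "order_bounded_below k z V"
  shows "order_bounded_below (\<lambda>x. h x + k x) z V"
proof -
  obtain F G where F: "(\<lambda>w. h (z + w)) has_laurent_expansion F"
    "0 \<le> fls_subdegree F \<or> (\<exists>v\<in>V. v \<le> fls_subdegree F)"
    and G: "(\<lambda>w. k (z + w)) has_laurent_expansion G"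
    "0 \<le> fls_subdegree G \<or> (\<exists>v\<in>V. v \<le> fls_subdegree G)"
    using assms unfolding order_bounded_below_def by blast
  have "(\<lambda>w. h (z + w) + k (z + w)) has_laurent_expansion F + G"
    by (intro laurent_expansion_intros F G)
  moreover have "0 \<le> fls_subdegree (F + G) \<or> (\<exists>v\<in>V. v \<le> fls_subdegree (F + G))"
  proof (cases "F + G = 0")
    case False
    then have "fls_subdegree F \<le> fls_subdegree (F + G) \<or> fls_subdegree G \<le> fls_subdegree (F + G)"
      using fls_plus_subdegree by fastforce
    then show ?thesis using F(2) G(2) by (auto intro: order_trans)
  qed simp
  ultimately show ?thesis
    unfolding order_bounded_below_def by blast
qed

lemma order_bounded_below_cmult:
  assumes "order_bounded_below h z V"
  shows "order_bounded_below (\<lambda>x. c * h x) z V"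
proof -
  obtain F where F: "(\<lambda>w. h (z + w)) has_laurent_expansion F"
    "0 \<le> fls_subdegree F \<or> (\<exists>v\<in>V. v \<le> fls_subdegree F)"
    using assms unfolding order_bounded_below_def by blast
  have "(\<lambda>w. c * h (z + w)) has_laurent_expansion fls_const c * F"
    by (intro laurent_expansion_intros F)
  moreover have "fls_subdegree (fls_const c * F) = fls_subdegree F" if "c \<noteq> 0" "F \<noteq> 0"
    using that by (simp add: fls_subdegree_mult)
  ultimately show ?thesis
    unfolding order_bounded_below_def using F(2) by (cases "c = 0 \<or> F = 0") auto
qed

lemma order_bounded_below_sum:
  assumes "finite A" "\<And>i. i \<in> A \<Longrightarrow> order_bounded_below (h i) z V"
  shows "order_bounded_below (\<lambda>x. \<Sum>i\<in>A. h i x) z V"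
  using assms
  by (induction A rule: finite_induct)
     (auto intro: order_bounded_below_analytic order_bounded_below_add)

lemma order_bounded_below_mono:
  "order_bounded_below h z V \<Longrightarrow> V \<subseteq> W \<Longrightarrow> order_bounded_below h z W"
  unfolding order_bounded_below_def by blast

lemma order_bounded_below_cong:
  assumes "order_bounded_below h z V" "eventually (\<lambda>x. h x = k x) (at z)"
  shows "order_bounded_below k z V"
  using assms has_laurent_expansion_cong'[OF assms(2) refl refl]
  unfolding order_bounded_below_def by simp

lemma order_bounded_below_imp_meromorphic:
  "order_bounded_below h z V \<Longrightarrow> h meromorphic_on {z}"
  unfolding order_bounded_below_def meromorphic_on_def by blast

lemma order_bounded_below_pole:
  assumes "order_bounded_below h z V" "is_pole h z"
  shows "\<exists>v\<in>V. v \<le> zorder h z"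
proof -
  obtain F where F: "(\<lambda>w. h (z + w)) has_laurent_expansion F"
    "0 \<le> fls_subdegree F \<or> (\<exists>v\<in>V. v \<le> fls_subdegree F)"
    using assms(1) unfolding order_bounded_below_def by blast
  have "fls_subdegree F < 0"
    using is_pole_fls_subdegree_iff[OF F(1)] assms(2) by blast
  moreover from this have "zorder h z = fls_subdegree F"
    using has_laurent_expansion_zorder[OF F(1)] by fastforce
  ultimately show ?thesis using F(2) by auto
qed

lemma order_bounded_below_scale:
  assumes "f meromorphic_on {c * z}" "c \<noteq> 0"
    and "is_pole f (c * z) \<Longrightarrow> zorder f (c * z) \<in> V"
  shows "order_bounded_below (\<lambda>x. f (c * x)) z V"
proof -
  obtain F where F: "(\<lambda>w. f (c * z + w)) has_laurent_expansion F"
    using assms(1) unfolding meromorphic_on_def by blast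
  define H where "H = fls_compose_fps F (fps_const c * fps_X)"
  have "(\<lambda>w. c * w) has_laurent_expansion fps_to_fls (fps_const c * fps_X)"
    by (intro has_laurent_expansion_fps fps_expansion_intros)
  then have "((\<lambda>w. f (c * z + w)) \<circ> (\<lambda>w. c * w)) has_laurent_expansion H"
    unfolding H_def using assms(2) by (intro has_laurent_expansion_compose F) auto
  then have H: "(\<lambda>w. f (c * (z + w))) has_laurent_expansion H"
    by (simp add: o_def ring_distribs)
  have "fls_subdegree H = fls_subdegree F"
    unfolding H_def using assms(2) by simp
  moreover have "zorder f (c * z) = fls_subdegree F \<and> is_pole f (c * z)" if "fls_subdegree F < 0"
  proof -
    from that have "F \<noteq> 0" by auto
    with that show ?thesis
      using has_laurent_expansion_zorder[OF F] is_pole_fls_subdegree_iff[OF F] by auto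
  qed
  ultimately show ?thesis
    unfolding order_bounded_below_def using H assms(3) by force
qed

lemma holomorphic_on_suminf_dominated:
  fixes h :: "nat \<Rightarrow> complex \<Rightarrow> complex"
  assumes S: "open S" and hol: "\<And>n. h n holomorphic_on S" and M: "summable M"
    and dom: "\<And>n x. x \<in> S \<Longrightarrow> norm (h n x) \<le> M n"
  shows "(\<lambda>x. \<Sum>n. h n x) holomorphic_on S"
proof -
  have hfd: "\<And>n x. x \<in> S \<Longrightarrow> (h n has_field_derivative deriv (h n) x) (at x)"
    using holomorphic_derivI[OF hol S] .
  have "\<forall>\<^sub>F n in sequentially. \<forall>x\<in>S. norm (h n x) \<le> M n"
    using dom by (simp add: always_eventually)
  then obtain g g' where g: "\<forall>x\<in>S. (\<lambda>n. h n x) sums g x \<and>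
      (\<lambda>n. deriv (h n) x) sums g' x \<and> (g has_field_derivative g' x) (at x)"
    using series_and_derivative_comparison[where f = h, OF S M hfd] by blast
  then have "g holomorphic_on S"
    using S holomorphic_on_open by blast
  moreover have "\<And>x. x \<in> S \<Longrightarrow> g x = (\<Sum>n. h n x)"
    using g sums_unique by blast
  ultimately show ?thesis
    by (rule holomorphic_transform)
qed

lemma order_bounded_below_suminf:
  fixes h :: "nat \<Rightarrow> complex \<Rightarrow> complex"
  assumes B: "open B" "z \<in> B"
    and hol: "\<And>n. h (n + N) holomorphic_on B" and M: "summable M"
    and dom: "\<And>n x. x \<in> B \<Longrightarrow> norm (h (n + N) x) \<le> M n"
    and head: "\<And>n. n < N \<Longrightarrow> order_bounded_below (h n) z V"
  shows "order_bounded_below (\<lambda>x. \<Sum>n. h n x) z V"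
proof -
  define T where "T x = (\<Sum>n. h (n + N) x)" for x
  have "T holomorphic_on B"
    unfolding T_def by (rule holomorphic_on_suminf_dominated[OF B(1) hol M dom])
  then have "order_bounded_below T z V"
    using B by (intro order_bounded_below_analytic holomorphic_on_imp_analytic_at)
  then have "order_bounded_below (\<lambda>x. T x + (\<Sum>n<N. h n x)) z V"
    by (intro order_bounded_below_add order_bounded_below_sum head) auto
  moreover have "\<forall>\<^sub>F x in at z. T x + (\<Sum>n<N. h n x) = (\<Sum>n. h n x)"
    using eventually_at_in_open'[OF B]
  proof eventually_elim
    case (elim x)
    then have "summable (\<lambda>n. h (n + N) x)"
      using summable_comparison_test'[OF M] dom by (metis (no_types, lifting))
    then have "summable (\<lambda>n. h n x)"
      by (rule summable_iff_shift[THEN iffD1])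
    then show ?case
      unfolding T_def by (subst suminf_split_initial_segment[of _ N]) auto
  qed
  ultimately show ?thesis
    by (rule order_bounded_below_cong)
qed

lemma q_inner_tail_dominated:
  fixes q :: complex and f :: "complex \<Rightarrow> complex"
  assumes q: "1 < norm q" and r: "0 < r" and hol: "f holomorphic_on ball 0 r"
    and lip: "\<And>x. norm x < r \<Longrightarrow> norm (f x - f 0) \<le> C * norm x"
  shows "(\<lambda>x. f (x / q ^ Suc (n + N)) - f 0) holomorphic_on ball 0 (r * norm q ^ N)"
    and "norm x < r * norm q ^ N \<Longrightarrow>
           norm (f (x / q ^ Suc (n + N)) - f 0) \<le> \<bar>C\<bar> * r * (1 / norm q) ^ Suc n"
proof -
  have "0 < norm q" using q by linarith
  have small: "norm (x / q ^ Suc (n + N)) < r / norm q ^ Suc n" if "norm x < r * norm q ^ N" for x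
  proof -
    have "norm x / norm q ^ Suc (n + N) < r * norm q ^ N / norm q ^ Suc (n + N)"
      using that \<open>0 < norm q\<close> by (intro divide_strict_right_mono) auto
    also have "\<dots> = r / norm q ^ Suc n"
      using \<open>0 < norm q\<close> by (simp add: power_add field_simps)
    finally show ?thesis
      by (simp add: norm_divide norm_power norm_mult)
  qed
  have shrink: "r / norm q ^ Suc n \<le> r"
    using r one_le_power[of "norm q" "Suc n"] q by (simp add: divide_le_eq del: power_Suc)
  have "(\<lambda>x. x / q ^ Suc (n + N)) ` ball 0 (r * norm q ^ N) \<subseteq> ball 0 r"
    using order_less_le_trans[OF small shrink] by auto
  then show "(\<lambda>x. f (x / q ^ Suc (n + N)) - f 0) holomorphic_on ball 0 (r * norm q ^ N)"
    using q by (intro holomorphic_intros holomorphic_on_compose_gen[OF _ hol, unfolded o_def]) auto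
  assume "norm x < r * norm q ^ N"
  then have "norm (f (x / q ^ Suc (n + N)) - f 0) \<le> C * norm (x / q ^ Suc (n + N))"
    using lip small shrink order_less_le_trans by blast
  also have "\<dots> \<le> \<bar>C\<bar> * (r / norm q ^ Suc n)"
    using less_imp_le[OF small[OF \<open>norm x < r * norm q ^ N\<close>]] by (intro mult_mono) auto
  also have "\<dots> = \<bar>C\<bar> * r * (1 / norm q) ^ Suc n"
    by (simp add: power_one_over)
  finally show "norm (f (x / q ^ Suc (n + N)) - f 0) \<le> \<bar>C\<bar> * r * (1 / norm q) ^ Suc n" .
qed

text \<open>Subtracting \<open>f 0\<close> makes the terms \<open>O(|q|\<^sup>-\<^sup>n)\<close>, so the series converges.\<close>
lemma q_difference_inner:
  fixes q :: complex and f :: "complex \<Rightarrow> complex"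
  assumes q: "1 < norm q" and mer: "f meromorphic_on UNIV" and r: "0 < r"
    and hol: "f holomorphic_on ball 0 r"
    and lip: "\<And>x. norm x < r \<Longrightarrow> norm (f x - f 0) \<le> C * norm x"
  shows "(\<Sum>n. f (q * x / q ^ Suc n) - f 0) = (\<Sum>n. f (x / q ^ Suc n) - f 0) + (f x - f 0)"
    and "order_bounded_below (\<lambda>x. \<Sum>n. f (x / q ^ Suc n) - f 0) z
           {zorder f (z / q ^ Suc n) | n. is_pole f (z / q ^ Suc n)}"
proof -
  have "0 < norm q" using q by linarith
  define h where "h n x = f (x / q ^ Suc n) - f 0" for n x
  define M where "M n = \<bar>C\<bar> * r * (1 / norm q) ^ Suc n" for n
  note tail = q_inner_tail_dominated[OF q r hol lip, folded h_def M_def]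
  have M: "summable M"
    unfolding M_def using q
    by (intro summable_mult summable_Suc_iff[THEN iffD2] summable_geometric) (simp add: divide_less_eq)
  have cover: "\<exists>N. norm x < r * norm q ^ N" for x
    using real_arch_pow[OF q, of "norm x / r"] r by (auto simp: field_simps)
  have "summable (\<lambda>n. h n x)"
  proof -
    obtain N where "norm x < r * norm q ^ N" using cover by blast
    then have "summable (\<lambda>n. h (n + N) x)"
      using summable_comparison_test'[OF M] tail(2) by (metis (no_types, lifting))
    then show ?thesis by (rule summable_iff_shift[THEN iffD1])
  qed
  then have "summable (\<lambda>n. f (x / q ^ n) - f 0)"
    by (subst summable_Suc_iff[symmetric]) (simp add: h_def)
  then show "(\<Sum>n. f (q * x / q ^ Suc n) - f 0) = (\<Sum>n. f (x / q ^ Suc n) - f 0) + (f x - f 0)"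
    using suminf_split_head \<open>0 < norm q\<close> by fastforce
  obtain N where "norm z < r * norm q ^ N" using cover by blast
  then show "order_bounded_below (\<lambda>x. \<Sum>n. f (x / q ^ Suc n) - f 0) z
           {zorder f (z / q ^ Suc n) | n. is_pole f (z / q ^ Suc n)}" (is "order_bounded_below _ _ ?V")
    unfolding h_def[symmetric]
  proof (intro order_bounded_below_suminf[OF _ _ tail(1) M tail(2)])
    fix n
    have "order_bounded_below (\<lambda>x. f (inverse (q ^ Suc n) * x) + - f 0) z ?V"
      using mer q by (intro order_bounded_below_add order_bounded_below_scale order_bounded_below_analytic)
        (auto simp: divide_inverse_commute intro: meromorphic_on_subset)
    moreover have "(\<lambda>x. f (inverse (q ^ Suc n) * x) + - f 0) = h n"
      by (auto simp: h_def divide_inverse_commute)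
    ultimately show "order_bounded_below (h n) z ?V"
      by simp
  qed auto
qed

lemma q_outer_tail_dominated:
  fixes q :: complex and g :: "complex \<Rightarrow> complex"
  assumes q: "1 < norm q" and r: "0 < r" and hol: "g holomorphic_on {x. r < norm x}"
    and decay: "\<And>x. r < norm x \<Longrightarrow> norm (g x) \<le> C / norm x"
  shows "(\<lambda>x. g (q ^ (n + N) * x)) holomorphic_on {x. r / norm q ^ N < norm x}"
    and "r / norm q ^ N < norm x \<Longrightarrow> norm (g (q ^ (n + N) * x)) \<le> \<bar>C\<bar> / r * (1 / norm q) ^ n"
proof -
  have "0 < norm q" using q by linarith
  have big: "r * norm q ^ n < norm (q ^ (n + N) * x)" if "r / norm q ^ N < norm x" for x
  proof -
    have "r < norm q ^ N * norm x"
      using that \<open>0 < norm q\<close> by (simp add: divide_less_eq mult.commute)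
    then have "r * norm q ^ n < norm q ^ n * (norm q ^ N * norm x)"
      using \<open>0 < norm q\<close> by (simp add: mult.commute)
    then show ?thesis
      by (simp add: norm_mult norm_power power_add)
  qed
  have grow: "r \<le> r * norm q ^ n"
    using r one_le_power[of "norm q" n] q by simp
  have "(\<lambda>x. q ^ (n + N) * x) ` {x. r / norm q ^ N < norm x} \<subseteq> {x. r < norm x}"
    using order_le_less_trans[OF grow big] by auto
  then show "(\<lambda>x. g (q ^ (n + N) * x)) holomorphic_on {x. r / norm q ^ N < norm x}"
    by (intro holomorphic_on_compose_gen[OF _ hol, unfolded o_def] holomorphic_intros) auto
  assume "r / norm q ^ N < norm x"
  note big = big[OF this]
  have "norm (g (q ^ (n + N) * x)) \<le> \<bar>C\<bar> / norm (q ^ (n + N) * x)"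
    using decay[OF order_le_less_trans[OF grow big]] abs_ge_self[of C]
    by (meson divide_right_mono norm_ge_zero order_trans)
  also have "\<dots> \<le> \<bar>C\<bar> / (r * norm q ^ n)"
  proof (rule divide_left_mono)
    have "0 < r * norm q ^ n" using r \<open>0 < norm q\<close> by simp
    then show "0 < norm (q ^ (n + N) * x) * (r * norm q ^ n)"
      using big by (metis mult_pos_pos order_less_trans)
  qed (use big in auto)
  also have "\<dots> = \<bar>C\<bar> / r * (1 / norm q) ^ n"
    by (simp add: power_one_over)
  finally show "norm (g (q ^ (n + N) * x)) \<le> \<bar>C\<bar> / r * (1 / norm q) ^ n" .
qed

lemma q_difference_outer:
  fixes q :: complex and g :: "complex \<Rightarrow> complex"
  assumes q: "1 < norm q" and mer: "g meromorphic_on - {0}" and r: "0 < r"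
    and hol: "g holomorphic_on {x. r < norm x}"
    and decay: "\<And>x. r < norm x \<Longrightarrow> norm (g x) \<le> C / norm x"
  shows "x \<noteq> 0 \<Longrightarrow> (\<Sum>n. g (q ^ n * (q * x))) = (\<Sum>n. g (q ^ n * x)) - g x"
    and "z \<noteq> 0 \<Longrightarrow> order_bounded_below (\<lambda>x. \<Sum>n. g (q ^ n * x)) z
           {zorder g (q ^ n * z) | n. is_pole g (q ^ n * z)}"
proof -
  have "0 < norm q" using q by linarith
  define h where "h n x = g (q ^ n * x)" for n x
  define M where "M n = \<bar>C\<bar> / r * (1 / norm q) ^ n" for n
  note tail = q_outer_tail_dominated[OF q r hol decay, folded h_def M_def]
  have M: "summable M"
    unfolding M_def using q by (intro summable_mult summable_geometric) (simp add: divide_less_eq)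
  have cover: "\<exists>N. r / norm q ^ N < norm x" if "x \<noteq> 0" for x :: complex
  proof -
    obtain N where "r / norm x < norm q ^ N" using real_arch_pow[OF q] by blast
    then show ?thesis
      using that \<open>0 < norm q\<close> by (auto simp: field_simps)
  qed
  show "(\<Sum>n. g (q ^ n * (q * x))) = (\<Sum>n. g (q ^ n * x)) - g x" if "x \<noteq> 0"
  proof -
    obtain N where "r / norm q ^ N < norm x" using cover \<open>x \<noteq> 0\<close> by blast
    then have "summable (\<lambda>n. h (n + N) x)"
      using summable_comparison_test'[OF M] tail(2) by (metis (no_types, lifting))
    then have "summable (\<lambda>n. h n x)"
      by (rule summable_iff_shift[THEN iffD1])
    then show ?thesis
      using suminf_split_head by (fastforce simp: h_def mult_ac)
  qed
  assume "z \<noteq> 0"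
  then obtain N where "r / norm q ^ N < norm z" using cover by blast
  then show "order_bounded_below (\<lambda>x. \<Sum>n. g (q ^ n * x)) z
           {zorder g (q ^ n * z) | n. is_pole g (q ^ n * z)}"
    unfolding h_def[symmetric]
  proof (intro order_bounded_below_suminf[OF _ _ tail(1) M tail(2)])
    show "order_bounded_below (h n) z {zorder g (q ^ n * z) | n. is_pole g (q ^ n * z)}" for n
      unfolding h_def using mer \<open>z \<noteq> 0\<close> q
      by (intro order_bounded_below_scale) (auto intro: meromorphic_on_subset)
  qed (auto intro: open_Collect_less continuous_intros)
qed

lemma is_pole_one_over_one_minus:
  assumes "is_pole (\<lambda>x::complex. 1 / (1 - x)) w"
  shows "w = 1" and "zorder (\<lambda>x::complex. 1 / (1 - x)) w = -1"
proof -
  show "w = 1"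
  proof (rule ccontr)
    assume "w \<noteq> 1"
    then have "\<not> is_pole (\<lambda>x::complex. 1 / (1 - x)) w"
      by (intro not_is_pole_holomorphic[of "- {1}"] holomorphic_intros) auto
    with assms show False by blast
  qed
  show "zorder (\<lambda>x::complex. 1 / (1 - x)) w = -1"
    unfolding \<open>w = 1\<close>
  proof (rule zorder_eqI[of UNIV _ "\<lambda>_. -1"])
    show "1 / (1 - x) = -1 * (x - 1) powi -1" if "x \<noteq> 1" for x :: complex
      using that by (simp add: power_int_minus field_simps)
  qed auto
qed

lemma norm_one_over_one_minus_le:
  fixes x :: complex
  shows "norm x < 1 / 2 \<Longrightarrow> norm (1 / (1 - x) - 1) \<le> 2 * norm x"
    and "2 < norm x \<Longrightarrow> norm (1 / (1 - x)) \<le> 2 / norm x"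
proof -
  assume "norm x < 1 / 2"
  then have "1 / 2 \<le> norm (1 - x)"
    using norm_triangle_ineq2[of 1 x] by simp
  then have "1 - x \<noteq> 0"
    by auto
  then have "norm (1 / (1 - x) - 1) = norm x / norm (1 - x)"
    by (simp add: field_simps norm_divide)
  also have "\<dots> \<le> norm x / (1 / 2)"
    using \<open>1 / 2 \<le> norm (1 - x)\<close> by (intro divide_left_mono) auto
  finally show "norm (1 / (1 - x) - 1) \<le> 2 * norm x"
    by simp
next
  assume "2 < norm x"
  then have "norm x / 2 \<le> norm (1 - x)" "0 < norm x / 2"
    using norm_triangle_ineq2[of x 1] by (simp add: norm_minus_commute, linarith)
  then have "1 / norm (1 - x) \<le> 1 / (norm x / 2)"
    by (intro frac_le) auto
  then show "norm (1 / (1 - x)) \<le> 2 / norm x"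
    by (simp add: norm_divide)
qed

lemma q_orbit_pole_one_over_one_minus:
  fixes q z :: complex
  assumes "q \<noteq> 0" "is_pole (\<lambda>x. 1 / (1 - x)) (q powi k * z)"
  shows "zorder (\<lambda>x. 1 / (1 - x)) (q powi k * z) \<in> {-1 | n::int. z = q powi n}"
proof -
  have "q powi k * z = 1"
    using is_pole_one_over_one_minus(1)[OF assms(2)] .
  then have "z = q powi (- k)"
    using assms(1) by (simp add: power_int_minus field_simps)
  then show ?thesis
    using is_pole_one_over_one_minus(2)[OF assms(2)] by blast
qed

lemma q_difference_unit:
  fixes q :: complex
  assumes q: "1 < norm q"
  obtains u where "\<And>x. x \<noteq> 0 \<Longrightarrow> u (q * x) = u x + 1"
    and "\<And>z. z \<noteq> 0 \<Longrightarrow> order_bounded_below u z {-1 | n::int. z = q powi n}"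
proof -
  \<comment> \<open>\<open>U\<^sub>1\<close> and \<open>U\<^sub>2\<close> below shift by \<open>\<phi> x - 1\<close> and \<open>-\<phi> x\<close>, which add up to \<open>-1\<close>\<close>
  define \<phi> :: "complex \<Rightarrow> complex" where "\<phi> = (\<lambda>x. 1 / (1 - x))"
  have "q \<noteq> 0"
    using q by auto
  have mer: "\<phi> meromorphic_on A" for A
    unfolding \<phi>_def by (intro meromorphic_intros)
  have hol: "\<phi> holomorphic_on ball 0 (1 / 2)" "\<phi> holomorphic_on {x. 2 < norm x}"
    unfolding \<phi>_def by (auto intro!: holomorphic_intros)
  have bounds: "norm x < 1 / 2 \<Longrightarrow> norm (\<phi> x - \<phi> 0) \<le> 2 * norm x"
    "2 < norm x \<Longrightarrow> norm (\<phi> x) \<le> 2 / norm x" for x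
    unfolding \<phi>_def using norm_one_over_one_minus_le by simp_all
  have radii: "(0::real) < 1 / 2" "(0::real) < 2"
    by simp_all
  define U\<^sub>1 where "U\<^sub>1 = (\<lambda>x. \<Sum>n. \<phi> (x / q ^ Suc n) - \<phi> 0)"
  define U\<^sub>2 where "U\<^sub>2 = (\<lambda>x. \<Sum>n. \<phi> (q ^ n * x))"
  have U\<^sub>1: "U\<^sub>1 (q * x) = U\<^sub>1 x + (\<phi> x - \<phi> 0)"
    "order_bounded_below U\<^sub>1 z {zorder \<phi> (z / q ^ Suc n) | n. is_pole \<phi> (z / q ^ Suc n)}" for x z
    unfolding U\<^sub>1_def using q_difference_inner[OF q mer radii(1) hol(1) bounds(1)] by blast+
  have U\<^sub>2: "U\<^sub>2 (q * x) = U\<^sub>2 x - \<phi> x" if "x \<noteq> 0" for x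
    unfolding U\<^sub>2_def using q_difference_outer[OF q mer radii(2) hol(2) bounds(2)] that by blast
  have U\<^sub>2_bound: "order_bounded_below U\<^sub>2 z {zorder \<phi> (q ^ n * z) | n. is_pole \<phi> (q ^ n * z)}"
    if "z \<noteq> 0" for z
    unfolding U\<^sub>2_def using q_difference_outer[OF q mer radii(2) hol(2) bounds(2)] that by blast
  show ?thesis
  proof (rule that[of "\<lambda>x. (-1) * U\<^sub>1 x + (-1) * U\<^sub>2 x"])
    show "(-1) * U\<^sub>1 (q * x) + (-1) * U\<^sub>2 (q * x) = (-1) * U\<^sub>1 x + (-1) * U\<^sub>2 x + 1" if "x \<noteq> 0" for x
      using that by (simp add: U\<^sub>1(1) U\<^sub>2 \<phi>_def)
    fix z :: complex assume "z \<noteq> 0"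
    have "z / q ^ Suc n = q powi (- int (Suc n)) * z" for n
      by (simp only: power_int_minus power_int_of_nat divide_inverse_commute)
    then have "{zorder \<phi> (z / q ^ Suc n) | n. is_pole \<phi> (z / q ^ Suc n)} \<subseteq> {-1 | n::int. z = q powi n}"
      unfolding \<phi>_def using q_orbit_pole_one_over_one_minus[OF \<open>q \<noteq> 0\<close>] by auto
    moreover have "{zorder \<phi> (q ^ n * z) | n. is_pole \<phi> (q ^ n * z)} \<subseteq> {-1 | n::int. z = q powi n}"
      unfolding \<phi>_def using q_orbit_pole_one_over_one_minus[OF \<open>q \<noteq> 0\<close>, of "int n" z for n] by auto
    ultimately show "order_bounded_below (\<lambda>x. (-1) * U\<^sub>1 x + (-1) * U\<^sub>2 x) z {-1 | n::int. z = q powi n}"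
      using order_bounded_below_mono[OF U\<^sub>1(2)] order_bounded_below_mono[OF U\<^sub>2_bound[OF \<open>z \<noteq> 0\<close>]]
      by (intro order_bounded_below_add order_bounded_below_cmult) auto
  qed
qed

lemma contour_integrable_Cauchy_circlepath:
  assumes "0 < r" "continuous_on (sphere 0 r) R" "norm x \<noteq> r"
  shows "(\<lambda>w. R w / (w - x)) contour_integrable_on circlepath 0 r"
  using assms by (intro contour_integrable_continuous_circlepath continuous_intros) auto

lemma holomorphic_on_Cauchy_integral_circlepath:
  assumes r: "0 < r" and cont: "continuous_on (sphere 0 r) R"
  shows "(\<lambda>x. contour_integral (circlepath 0 r) (\<lambda>w. R w / (w - x))) holomorphic_on - sphere 0 r"
    (is "?I holomorphic_on _")
proof -
  have "(?I has_field_derivative of_nat 1 * contour_integral (circlepath 0 r) (\<lambda>w. R w / (w - x) ^ Suc 1))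
          (at x)" if "x \<in> - sphere 0 r" for x
  proof (rule Cauchy_next_derivative(2)[where B = "2 * pi * r" and S = "- sphere 0 r"])
    show "((\<lambda>w. R w / (w - x) ^ 1) has_contour_integral ?I x) (circlepath 0 r)"
      if "x \<in> - sphere 0 r - path_image (circlepath 0 r)" for x
      using has_contour_integral_integral[OF contour_integrable_Cauchy_circlepath[OF r cont]] that
      by simp
  qed (use that r cont in \<open>auto simp: vector_derivative_circlepath norm_mult\<close>)
  then show ?thesis
    unfolding holomorphic_on_open[OF open_Compl[OF closed_sphere]] by blast
qed

lemma homotopic_loops_circlepath_annulus:
  assumes "0 \<le> r1" "r1 \<le> r2"
  shows "homotopic_loops {w. r1 \<le> norm w \<and> norm w \<le> r2} (circlepath 0 r1) (circlepath 0 r2)"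
proof (rule homotopic_loops_linear)
  fix t :: real
  define e where "e = exp (2 * of_real pi * \<i> * of_real t)"
  have "norm e = 1"
    unfolding e_def by (simp add: norm_exp_eq_Re)
  have "norm ((1 - u) *\<^sub>R circlepath 0 r1 t + u *\<^sub>R circlepath 0 r2 t) = (1 - u) * r1 + u * r2"
    if "0 \<le> u" "u \<le> 1" for u
  proof -
    have "(1 - u) *\<^sub>R circlepath 0 r1 t + u *\<^sub>R circlepath 0 r2 t = of_real ((1 - u) * r1 + u * r2) * e"
      by (simp add: circlepath e_def scaleR_conv_of_real algebra_simps)
    then have "norm ((1 - u) *\<^sub>R circlepath 0 r1 t + u *\<^sub>R circlepath 0 r2 t)
                 = \<bar>(1 - u) * r1 + u * r2\<bar> * norm e"
      by (simp only: norm_mult norm_of_real)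
    then show ?thesis
      using that assms \<open>norm e = 1\<close> by simp
  qed
  moreover have "r1 \<le> (1 - u) * r1 + u * r2" "(1 - u) * r1 + u * r2 \<le> r2" if "0 \<le> u" "u \<le> 1" for u
    using that assms mult_left_mono[of r1 r2 u] mult_left_mono[of r1 r2 "1 - u"]
    by (simp_all add: algebra_simps)
  ultimately show "closed_segment (circlepath 0 r1 t) (circlepath 0 r2 t)
                     \<subseteq> {w. r1 \<le> norm w \<and> norm w \<le> r2}"
    by (auto simp: closed_segment_def)
qed auto

text \<open>
  The difference quotient of \<open>R\<close> at \<open>x\<close> is holomorphic on the annulus, so its integrals over the
  two homotopic circles agree; the remaining term \<open>R x / (w - x)\<close> integrates to \<open>2\<pi>i R x\<close> over
  the outer circle and to \<open>0\<close> over the inner one.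
\<close>
lemma Cauchy_integral_formula_annulus:
  assumes ab: "0 < a" "a < r1" "r1 < r2" "r2 < b"
    and hol: "R holomorphic_on {w. a < norm w \<and> norm w < b}"
    and x: "r1 < norm x" "norm x < r2"
  shows "contour_integral (circlepath 0 r2) (\<lambda>w. R w / (w - x)) -
         contour_integral (circlepath 0 r1) (\<lambda>w. R w / (w - x)) = 2 * pi * \<i> * R x"
proof -
  define S where "S = {w::complex. a < norm w \<and> norm w < b}"
  have "open S"
    unfolding S_def by (intro open_Collect_conj open_Collect_less continuous_intros)
  define \<phi> where "\<phi> w = (if w = x then deriv R x else (R w - R x) / (w - x))" for w
  have "\<phi> holomorphic_on S"
    unfolding \<phi>_def using hol x ab \<open>open S\<close>
    by (intro pole_lemma) (auto simp: S_def interior_open)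
  moreover have "homotopic_loops S (circlepath 0 r1) (circlepath 0 r2)"
    using ab by (intro homotopic_loops_subset[OF homotopic_loops_circlepath_annulus]) (auto simp: S_def)
  ultimately have "contour_integral (circlepath 0 r1) \<phi> = contour_integral (circlepath 0 r2) \<phi>"
    using \<open>open S\<close> by (intro Cauchy_theorem_homotopic_loops) auto
  moreover have "contour_integral (circlepath 0 r) \<phi> =
      contour_integral (circlepath 0 r) (\<lambda>w. R w / (w - x)) - j"
    if r: "r1 \<le> r" "r \<le> r2" "norm x \<noteq> r"
      and j: "((\<lambda>w. R x / (w - x)) has_contour_integral j) (circlepath 0 r)" for r j
  proof (rule contour_integral_unique, rule has_contour_integral_eq)
    have "continuous_on (sphere 0 r) R"
      using ab r by (intro continuous_on_subset[OF holomorphic_on_imp_continuous_on[OF hol]]) auto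
    then show "((\<lambda>w. R w / (w - x) - R x / (w - x)) has_contour_integral
            contour_integral (circlepath 0 r) (\<lambda>w. R w / (w - x)) - j) (circlepath 0 r)"
      using ab r
      by (intro has_contour_integral_diff has_contour_integral_integral j
                contour_integrable_Cauchy_circlepath) auto
    show "R w / (w - x) - R x / (w - x) = \<phi> w" if "w \<in> path_image (circlepath 0 r)" for w
      using that r ab by (auto simp: \<phi>_def diff_divide_distrib)
  qed
  moreover have "((\<lambda>w. R x / (w - x)) has_contour_integral 2 * pi * \<i> * R x) (circlepath 0 r2)"
    using Cauchy_integral_circlepath_simple[of "\<lambda>_. R x" 0 r2 x] x by auto
  moreover have "((\<lambda>w. R x / (w - x)) has_contour_integral 0) (circlepath 0 r1)"
    using x ab by (intro Cauchy_theorem_disc_simple[of _ 0 "norm x"] holomorphic_intros) auto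
  ultimately show ?thesis
    using ab x by force
qed

definition Cauchy_transform :: "(complex \<Rightarrow> complex) \<Rightarrow> real \<Rightarrow> complex \<Rightarrow> complex" where
  "Cauchy_transform R r x = contour_integral (circlepath 0 r) (\<lambda>w. R w / (w - x)) / (2 * pi * \<i>)"

lemma holomorphic_on_Cauchy_transform:
  "0 < r \<Longrightarrow> continuous_on (sphere 0 r) R \<Longrightarrow> Cauchy_transform R r holomorphic_on - sphere 0 r"
  unfolding Cauchy_transform_def
  by (intro holomorphic_intros holomorphic_on_Cauchy_integral_circlepath) auto

lemma Cauchy_transform_annulus:
  assumes "0 < a" "a < r1" "r1 < r2" "r2 < b"
    and "R holomorphic_on {w. a < norm w \<and> norm w < b}" and "r1 < norm x" "norm x < r2"
  shows "Cauchy_transform R r2 x - Cauchy_transform R r1 x = R x"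
  using Cauchy_integral_formula_annulus[OF assms]
  by (simp add: Cauchy_transform_def diff_divide_distrib[symmetric])

lemma norm_Cauchy_transform_le:
  assumes r: "0 < r" and cont: "continuous_on (sphere 0 r) R"
    and K: "\<And>w. norm w = r \<Longrightarrow> norm (R w) \<le> K" and x: "2 * r < norm x"
  shows "norm (Cauchy_transform R r x) \<le> 2 * K * r / norm x"
proof -
  have "0 \<le> K"
    using K[of "of_real r"] r by (auto intro: order_trans[OF norm_ge_zero])
  have "norm (Cauchy_transform R r x) = norm (contour_integral (circlepath 0 r) (\<lambda>w. R w / (w - x))) / (2 * pi)"
    by (simp add: Cauchy_transform_def norm_divide norm_mult)
  also have "\<dots> \<le> 2 * K / norm x * (2 * pi * r) / (2 * pi)"
  proof (intro divide_right_mono has_contour_integral_bound_circlepath)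
    show "((\<lambda>w. R w / (w - x)) has_contour_integral contour_integral (circlepath 0 r) (\<lambda>w. R w / (w - x)))
            (circlepath 0 r)"
      using r x by (intro has_contour_integral_integral contour_integrable_Cauchy_circlepath cont) auto
    fix w :: complex assume "norm (w - 0) = r"
    then have w: "norm w = r" by simp
    have "norm x / 2 \<le> norm (w - x)"
      using norm_triangle_ineq2[of x w] w x by (simp add: norm_minus_commute)
    then have "norm (R w) / norm (w - x) \<le> K / (norm x / 2)"
      using K[OF w] x r \<open>0 \<le> K\<close> by (intro frac_le) auto
    then show "norm (R w / (w - x)) \<le> 2 * K / norm x"
      by (simp add: norm_divide mult.commute)
  qed (use r x \<open>0 \<le> K\<close> in auto)
  finally show ?thesis
    by simp
qed

lemma norm_Cauchy_transform_diff_le: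
  assumes r: "0 < r" and cont: "continuous_on (sphere 0 r) R"
    and K: "\<And>w. norm w = r \<Longrightarrow> norm (R w) \<le> K" and x: "norm x < r / 2"
  shows "norm (Cauchy_transform R r x - Cauchy_transform R r 0) \<le> 2 * K / r * norm x"
proof -
  have "0 \<le> K"
    using K[of "of_real r"] r by (auto intro: order_trans[OF norm_ge_zero])
  have "norm (Cauchy_transform R r x - Cauchy_transform R r 0) =
        norm (contour_integral (circlepath 0 r) (\<lambda>w. R w / (w - x)) -
              contour_integral (circlepath 0 r) (\<lambda>w. R w / (w - 0))) / (2 * pi)"
    by (simp add: Cauchy_transform_def norm_divide norm_mult diff_divide_distrib[symmetric])
  also have "\<dots> \<le> 2 * K * norm x / r ^ 2 * (2 * pi * r) / (2 * pi)"
  proof (intro divide_right_mono has_contour_integral_bound_circlepath)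
    show "((\<lambda>w. R w / (w - x) - R w / (w - 0)) has_contour_integral
            contour_integral (circlepath 0 r) (\<lambda>w. R w / (w - x)) -
            contour_integral (circlepath 0 r) (\<lambda>w. R w / (w - 0))) (circlepath 0 r)"
      using r x
      by (intro has_contour_integral_diff has_contour_integral_integral
                contour_integrable_Cauchy_circlepath cont) auto
    fix w :: complex assume "norm (w - 0) = r"
    then have w: "norm w = r" by simp
    have "r / 2 \<le> norm (w - x)"
      using norm_triangle_ineq2[of w x] w x by simp
    have "w \<noteq> x" "w \<noteq> 0"
      using w x r by auto
    then have "R w / (w - x) - R w / (w - 0) = R w * x / ((w - x) * w)"
      by (simp add: field_simps)
    then have "norm (R w / (w - x) - R w / (w - 0)) = norm (R w) * norm x / (norm (w - x) * r)"
      by (simp add: norm_divide norm_mult w)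
    also have "\<dots> \<le> K * norm x / (r / 2 * r)"
      using K[OF w] \<open>r / 2 \<le> norm (w - x)\<close> r \<open>0 \<le> K\<close>
      by (intro frac_le mult_right_mono mult_mono) auto
    finally show "norm (R w / (w - x) - R w / (w - 0)) \<le> 2 * K * norm x / r ^ 2"
      by (simp add: power2_eq_square mult_ac)
  qed (use r \<open>0 \<le> K\<close> in auto)
  finally show ?thesis
    using r by (simp add: power2_eq_square mult_ac)
qed

lemma holomorphic_on_annulus_split:
  fixes R :: "complex \<Rightarrow> complex"
  assumes ab: "0 < a" "a < r1" "r1 < r2" "r2 < b"
    and hol: "R holomorphic_on {w. a < norm w \<and> norm w < b}"
  obtains F G C D where "F holomorphic_on ball 0 r2" "G holomorphic_on {w. r1 < norm w}"
    "\<And>x. r1 < norm x \<Longrightarrow> norm x < r2 \<Longrightarrow> F x + G x = R x"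
    "\<And>x. norm x < r2 / 2 \<Longrightarrow> norm (F x - F 0) \<le> C * norm x"
    "\<And>x. 2 * r1 < norm x \<Longrightarrow> norm (G x) \<le> D / norm x"
proof -
  have cont: "continuous_on (sphere 0 r) R" if "r1 \<le> r" "r \<le> r2" for r
    using that ab by (intro continuous_on_subset[OF holomorphic_on_imp_continuous_on[OF hol]]) auto
  have "\<exists>K. \<forall>w. norm w = r \<longrightarrow> norm (R w) \<le> K" if "r1 \<le> r" "r \<le> r2" for r
    using compact_imp_bounded[OF compact_continuous_image[OF cont[OF that] compact_sphere]]
    by (force simp: bounded_iff)
  then obtain K1 K2 where K1: "\<And>w. norm w = r1 \<Longrightarrow> norm (R w) \<le> K1"
    and K2: "\<And>w. norm w = r2 \<Longrightarrow> norm (R w) \<le> K2"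
    using ab by (meson order_refl less_imp_le)
  show ?thesis
  proof (rule that[of "Cauchy_transform R r2" "\<lambda>x. - Cauchy_transform R r1 x"])
    show "Cauchy_transform R r2 holomorphic_on ball 0 r2"
      "(\<lambda>x. - Cauchy_transform R r1 x) holomorphic_on {w. r1 < norm w}"
      using ab by (auto intro!: holomorphic_intros cont
          intro: holomorphic_on_subset[OF holomorphic_on_Cauchy_transform])
    show "Cauchy_transform R r2 x + - Cauchy_transform R r1 x = R x" if "r1 < norm x" "norm x < r2" for x
      using Cauchy_transform_annulus[OF ab hol that] by simp
    show "norm (Cauchy_transform R r2 x - Cauchy_transform R r2 0) \<le> 2 * K2 / r2 * norm x"
      if "norm x < r2 / 2" for x
      using norm_Cauchy_transform_diff_le[OF _ cont K2 that] ab by simp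
    show "norm (- Cauchy_transform R r1 x) \<le> 2 * K1 * r1 / norm x" if "2 * r1 < norm x" for x
      using norm_Cauchy_transform_le[OF _ cont K1 that] ab by simp
  qed
qed

lemma meromorphic_diff_analytic:
  assumes h: "h meromorphic_on {w}" and k: "k analytic_on {w}"
    and f: "eventually (\<lambda>x. f x = h x - k x) (at w)"
  shows "f meromorphic_on {w}"
    and "is_pole f w \<Longrightarrow> is_pole h w \<and> zorder f w = zorder h w"
proof -
  obtain H where H: "(\<lambda>x. h (w + x)) has_laurent_expansion H"
    using h unfolding meromorphic_on_def by blast
  obtain K where "(\<lambda>x. k (w + x)) has_fps_expansion K"
    using analytic_at_imp_has_fps_expansion[OF k] by blast
  then have "(\<lambda>x. k (w + x)) has_laurent_expansion fps_to_fls K"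
    by (rule has_laurent_expansion_fps)
  then have "(\<lambda>x. h (w + x) - k (w + x)) has_laurent_expansion H - fps_to_fls K"
    by (intro laurent_expansion_intros H)
  then have fHK: "(\<lambda>x. f (w + x)) has_laurent_expansion H - fps_to_fls K"
    using has_laurent_expansion_cong'[OF f refl refl] by simp
  then show "f meromorphic_on {w}"
    unfolding meromorphic_on_def by blast
  assume "is_pole f w"
  then have neg: "fls_subdegree (H - fps_to_fls K) < 0"
    using is_pole_fls_subdegree_iff[OF fHK] by simp
  have "0 \<le> fls_subdegree (fps_to_fls K)"
    by (simp add: fls_subdegree_fls_to_fps)
  moreover from this neg have "fls_subdegree H < 0"
    using fls_subdegree_minus[of H "fps_to_fls K"] by fastforce
  ultimately have "fls_subdegree H < 0" "H \<noteq> 0" "fls_subdegree (H - fps_to_fls K) = fls_subdegree H"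
    using fls_subdegree_diff_eq1[of H] by fastforce+
  moreover have "H \<noteq> fps_to_fls K"
    using neg by auto
  ultimately show "is_pole h w \<and> zorder f w = zorder h w"
    using has_laurent_expansion_zorder[OF fHK] has_laurent_expansion_zorder[OF H]
      is_pole_fls_subdegree_iff[OF H] by auto
qed

lemma meromorphic_eventually_analytic:
  assumes "k analytic_on {w}" "eventually (\<lambda>x. f x = k x) (at w)"
  shows "f meromorphic_on {w}" and "\<not> is_pole f w"
proof -
  show "f meromorphic_on {w}"
    using assms analytic_on_imp_meromorphic_on meromorphic_on_cong[of "{w}" f k] by blast
  show "\<not> is_pole f w"
    using assms is_pole_cong[of f k w w] analytic_at_imp_no_pole by blast
qed

lemma remove_sings_holomorphic_on_pole_free:
  assumes mer: "R meromorphic_on A" and "B \<subseteq> A" and no_pole: "\<And>w. w \<in> B \<Longrightarrow> \<not> is_pole R w"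
  shows "remove_sings R holomorphic_on B"
proof (rule analytic_imp_holomorphic, subst analytic_on_analytic_at, intro ballI)
  fix w assume "w \<in> B"
  then have "w \<in> A" "isolated_singularity_at R w"
    using \<open>B \<subseteq> A\<close> meromorphic_on_isolated_singularity[OF meromorphic_on_subset[OF mer]] by auto
  then show "remove_sings R analytic_on {w}"
    using nicely_meromorphic_on_imp_analytic_at[OF remove_sings_nicely_meromorphic[OF mer]]
      no_pole[OF \<open>w \<in> B\<close>] by simp
qed

lemma meromorphic_pole_free_annulus:
  fixes R :: "complex \<Rightarrow> complex"
  assumes mer: "R meromorphic_on - {0}" and \<rho>: "0 < \<rho>"
  obtains b where "\<rho> < b" "\<And>w. \<rho> < norm w \<Longrightarrow> norm w < b \<Longrightarrow> \<not> is_pole R w"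
proof -
  define K where "K = cball (0::complex) (\<rho> + 1) - ball 0 \<rho>"
  have "{w. is_pole R w} sparse_in - {0}"
    using meromorphic_on_imp_not_pole_cosparse[OF mer] by (simp add: eventually_cosparse)
  then have "{w. is_pole R w} sparse_in K"
    by (rule sparse_in_subset) (use \<rho> in \<open>auto simp: K_def\<close>)
  then have "finite (K \<inter> {w. is_pole R w})"
    by (intro sparse_in_compact_finite) (auto simp: K_def intro: compact_diff)
  define P where "P = {w \<in> K. is_pole R w \<and> \<rho> < norm w}"
  have "finite P"
    unfolding P_def by (rule finite_subset[OF _ \<open>finite (K \<inter> {w. is_pole R w})\<close>]) auto
  define b where "b = Min (insert (\<rho> + 1) (norm ` P))"
  show ?thesis
  proof (rule that[of b])
    show "\<rho> < b"
      unfolding b_def using \<open>finite P\<close> by (auto simp: P_def)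
    show "\<not> is_pole R w" if "\<rho> < norm w" "norm w < b" for w
    proof
      assume "is_pole R w"
      moreover have "b \<le> \<rho> + 1"
        unfolding b_def using \<open>finite P\<close> by simp
      ultimately have "w \<in> P"
        using that by (auto simp: P_def K_def)
      then have "b \<le> norm w"
        unfolding b_def using \<open>finite P\<close> by simp
      with that show False
        by simp
    qed
  qed
qed

lemma meromorphic_glue_annulus:
  fixes R F G :: "complex \<Rightarrow> complex"
  assumes mer: "R meromorphic_on - {0}" and r: "0 < r\<^sub>1" "r\<^sub>1 < r\<^sub>2"
    and F: "F holomorphic_on ball 0 r\<^sub>2" and G: "G holomorphic_on {w. r\<^sub>1 < norm w}"
    and FG: "\<And>x. r\<^sub>1 < norm x \<Longrightarrow> norm x < r\<^sub>2 \<Longrightarrow> F x + G x = R x"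
  defines "f \<equiv> \<lambda>x. if norm x < r\<^sub>2 then F x else R x - G x"
    and "g \<equiv> \<lambda>x. if r\<^sub>1 < norm x then G x else R x - F x"
  shows "f meromorphic_on UNIV" and "g meromorphic_on - {0}" and "f x + g x = R x"
    and "is_pole f w \<Longrightarrow> is_pole R w \<and> r\<^sub>2 \<le> norm w \<and> zorder f w = zorder R w"
    and "w \<noteq> 0 \<Longrightarrow> is_pole g w \<Longrightarrow> is_pole R w \<and> norm w \<le> r\<^sub>1 \<and> zorder g w = zorder R w"
proof -
  have "open (ball (0::complex) r\<^sub>2)" and open_out: "open {w::complex. r\<^sub>1 < norm w}"
    by (auto intro: open_Collect_less continuous_intros)
  note near = eventually_at_in_open'[OF this(1)] eventually_at_in_open'[OF open_out]
  have F_at: "F analytic_on {w}" "\<forall>\<^sub>F x in at w. f x = F x" "\<forall>\<^sub>F x in at w. g x = R x - F x"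
    if "norm w < r\<^sub>2" for w
    using that holomorphic_on_imp_analytic_at[OF F] near(1)[of w]
    by (auto elim!: eventually_mono simp: f_def g_def FG[symmetric])
  have G_at: "G analytic_on {w}" "\<forall>\<^sub>F x in at w. g x = G x" "\<forall>\<^sub>F x in at w. f x = R x - G x"
    if "r\<^sub>1 < norm w" for w
    using that holomorphic_on_imp_analytic_at[OF G open_out] near(2)[of w]
    by (auto elim!: eventually_mono simp: f_def g_def FG[symmetric])
  have R_at: "R meromorphic_on {w}" if "w \<noteq> 0" for w
    using that by (intro meromorphic_on_subset[OF mer]) auto
  have f_at: "f meromorphic_on {w} \<and> (is_pole f w \<longrightarrow>
      is_pole R w \<and> r\<^sub>2 \<le> norm w \<and> zorder f w = zorder R w)" for w
  proof (cases "norm w < r\<^sub>2")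
    case False
    then have "r\<^sub>1 < norm w" "w \<noteq> 0"
      using r by auto
    then show ?thesis
      using meromorphic_diff_analytic[OF R_at G_at(1) G_at(3)] False by auto
  qed (use F_at meromorphic_eventually_analytic in blast)
  have g_at: "g meromorphic_on {w} \<and> (is_pole g w \<longrightarrow>
      is_pole R w \<and> norm w \<le> r\<^sub>1 \<and> zorder g w = zorder R w)" if "w \<noteq> 0" for w
  proof (cases "r\<^sub>1 < norm w")
    case False
    then have "norm w < r\<^sub>2"
      using r by auto
    then show ?thesis
      using meromorphic_diff_analytic[OF R_at[OF that] F_at(1) F_at(3)] False by auto
  qed (use G_at meromorphic_eventually_analytic in blast)
  show "f meromorphic_on UNIV"
    using f_at meromorphic_on_meromorphic_at by blast
  show "g meromorphic_on - {0}"
    using g_at meromorphic_on_meromorphic_at by blast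
  show "f x + g x = R x"
    using FG[of x] r by (auto simp: f_def g_def)
  show "is_pole f w \<Longrightarrow> is_pole R w \<and> r\<^sub>2 \<le> norm w \<and> zorder f w = zorder R w"
    "w \<noteq> 0 \<Longrightarrow> is_pole g w \<Longrightarrow> is_pole R w \<and> norm w \<le> r\<^sub>1 \<and> zorder g w = zorder R w"
    using f_at g_at by blast+
qed

lemma meromorphic_annulus_split:
  fixes R :: "complex \<Rightarrow> complex"
  assumes mer: "R meromorphic_on - {0}" and "0 < a"
  obtains f g r C s D where
    "f meromorphic_on UNIV" "g meromorphic_on - {0}" "\<And>x. f x + g x = remove_sings R x"
    "0 < r" "f holomorphic_on ball 0 r" "\<And>x. norm x < r \<Longrightarrow> norm (f x - f 0) \<le> C * norm x"
    "0 < s" "g holomorphic_on {x. s < norm x}" "\<And>x. s < norm x \<Longrightarrow> norm (g x) \<le> D / norm x"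
    "\<And>w. is_pole f w \<Longrightarrow> w \<in> poles_gt R a \<and> zorder f w = zorder R w"
    "\<And>w. w \<noteq> 0 \<Longrightarrow> is_pole g w \<Longrightarrow> w \<in> poles_le R a \<and> zorder g w = zorder R w"
proof -
  obtain b where "a < b" and no_pole: "\<And>w. a < norm w \<Longrightarrow> norm w < b \<Longrightarrow> \<not> is_pole R w"
    using meromorphic_pole_free_annulus[OF mer \<open>0 < a\<close>] by blast
  define r\<^sub>1 where "r\<^sub>1 = a + (b - a) / 3"
  define r\<^sub>2 where "r\<^sub>2 = a + 2 * (b - a) / 3"
  have r: "0 < a" "a < r\<^sub>1" "r\<^sub>1 < r\<^sub>2" "r\<^sub>2 < b"
    using \<open>0 < a\<close> \<open>a < b\<close> by (simp_all add: r\<^sub>1_def r\<^sub>2_def field_simps)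
  have iso: "isolated_singularity_at R w" if "w \<noteq> 0" for w
    using that by (intro meromorphic_on_isolated_singularity meromorphic_on_subset[OF mer]) auto
  have "remove_sings R holomorphic_on {w. a < norm w \<and> norm w < b}"
    using \<open>0 < a\<close> no_pole by (intro remove_sings_holomorphic_on_pole_free[OF mer]) auto
  then obtain F G C D where F: "F holomorphic_on ball 0 r\<^sub>2" and G: "G holomorphic_on {w. r\<^sub>1 < norm w}"
    and FG: "\<And>x. r\<^sub>1 < norm x \<Longrightarrow> norm x < r\<^sub>2 \<Longrightarrow> F x + G x = remove_sings R x"
    and C: "\<And>x. norm x < r\<^sub>2 / 2 \<Longrightarrow> norm (F x - F 0) \<le> C * norm x"
    and D: "\<And>x. 2 * r\<^sub>1 < norm x \<Longrightarrow> norm (G x) \<le> D / norm x"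
    using holomorphic_on_annulus_split[OF r] by blast
  define f where "f \<equiv> \<lambda>x. if norm x < r\<^sub>2 then F x else remove_sings R x - G x"
  define g where "g \<equiv> \<lambda>x. if r\<^sub>1 < norm x then G x else remove_sings R x - F x"
  have glue: "f meromorphic_on UNIV" "g meromorphic_on - {0}" "\<And>x. f x + g x = remove_sings R x"
    "\<And>w. is_pole f w \<Longrightarrow>
       is_pole (remove_sings R) w \<and> r\<^sub>2 \<le> norm w \<and> zorder f w = zorder (remove_sings R) w"
    "\<And>w. w \<noteq> 0 \<Longrightarrow> is_pole g w \<Longrightarrow>
       is_pole (remove_sings R) w \<and> norm w \<le> r\<^sub>1 \<and> zorder g w = zorder (remove_sings R) w"
    unfolding f_def g_def using r
    by (intro meromorphic_glue_annulus[OF remove_sings_meromorphic[OF mer] _ _ F G]; simp add: FG)+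
  show ?thesis
  proof (rule that[of f g "r\<^sub>2 / 2" C "2 * r\<^sub>1" D])
    show "f holomorphic_on ball 0 (r\<^sub>2 / 2)" "g holomorphic_on {x. 2 * r\<^sub>1 < norm x}"
      using r by (auto simp: f_def g_def intro: holomorphic_transform[OF holomorphic_on_subset[OF F]]
          holomorphic_transform[OF holomorphic_on_subset[OF G]])
    show "norm (f x - f 0) \<le> C * norm x" if "norm x < r\<^sub>2 / 2" for x
      using C[OF that] that r by (simp add: f_def)
    show "norm (g x) \<le> D / norm x" if "2 * r\<^sub>1 < norm x" for x
      using D[OF that] that r by (simp add: g_def)
    show "w \<in> poles_gt R a \<and> zorder f w = zorder R w" if "is_pole f w" for w
    proof -
      have "w \<noteq> 0"
        using glue(4)[OF that] r by auto
      then show ?thesis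
        using glue(4)[OF that] r iso[of w] by (auto simp: poles_gt_def)
    qed
    show "w \<in> poles_le R a \<and> zorder g w = zorder R w" if "w \<noteq> 0" "is_pole g w" for w
    proof -
      have "is_pole R w" "norm w \<le> r\<^sub>1" "zorder g w = zorder R w"
        using glue(5)[OF that] iso[OF that(1)] by auto
      moreover from this have "norm w \<le> a"
        using no_pole[of w] r by fastforce
      ultimately show ?thesis
        using that(1) by (simp add: poles_le_def)
    qed
  qed (use glue r in auto)
qed

text \<open>
  The admissible lower bounds for \<open>zorder y z\<close>, one family for each alternative of the theorem
  (recall \<open>pole_order = - zorder\<close>).
\<close>
definition q_pole_bounds :: "complex \<Rightarrow> (complex \<Rightarrow> complex) \<Rightarrow> real \<Rightarrow> complex \<Rightarrow> int set" where
  "q_pole_bounds q R \<rho> z =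
     {-1 | n::int. z = q powi n} \<union>
     {zorder R a | a n. a \<in> poles_gt R \<rho> \<and> 1 \<le> n \<and> z = a * q ^ n} \<union>
     {zorder R a | a n. a \<in> poles_le R \<rho> \<and> z = a / q ^ n}"

lemma q_pole_bounds_inner:
  assumes "q \<noteq> 0" and "\<And>w. is_pole f w \<Longrightarrow> w \<in> poles_gt R \<rho> \<and> zorder f w = zorder R w"
  shows "{zorder f (z / q ^ Suc n) | n. is_pole f (z / q ^ Suc n)} \<subseteq> q_pole_bounds q R \<rho> z"
proof safe
  fix n assume "is_pole f (z / q ^ Suc n)"
  moreover have "z = z / q ^ Suc n * q ^ Suc n"
    using assms(1) by simp
  ultimately have "zorder f (z / q ^ Suc n) \<in>
      {zorder R a | a n. a \<in> poles_gt R \<rho> \<and> 1 \<le> n \<and> z = a * q ^ n}"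
    using assms(2) by (intro CollectI exI[of _ "z / q ^ Suc n"] exI[of _ "Suc n"]) simp
  then show "zorder f (z / q ^ Suc n) \<in> q_pole_bounds q R \<rho> z"
    unfolding q_pole_bounds_def by (intro UnI1 UnI2)
qed

lemma q_pole_bounds_outer:
  assumes "q \<noteq> 0" "z \<noteq> 0"
    and "\<And>w. w \<noteq> 0 \<Longrightarrow> is_pole g w \<Longrightarrow> w \<in> poles_le R \<rho> \<and> zorder g w = zorder R w"
  shows "{zorder g (q ^ n * z) | n. is_pole g (q ^ n * z)} \<subseteq> q_pole_bounds q R \<rho> z"
proof safe
  fix n assume "is_pole g (q ^ n * z)"
  then have "q ^ n * z \<in> poles_le R \<rho>" "zorder g (q ^ n * z) = zorder R (q ^ n * z)"
    using assms by (simp_all add: assms(3))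
  moreover have "z = q ^ n * z / q ^ n"
    using assms(1) by simp
  ultimately have "zorder g (q ^ n * z) \<in> {zorder R a | a n. a \<in> poles_le R \<rho> \<and> z = a / q ^ n}"
    by (intro CollectI exI[of _ "q ^ n * z"] exI[of _ n]) simp
  then show "zorder g (q ^ n * z) \<in> q_pole_bounds q R \<rho> z"
    unfolding q_pole_bounds_def by (intro UnI2)
qed

lemma q_difference_solution:
  fixes q :: complex and R :: "complex \<Rightarrow> complex"
  assumes q: "1 < norm q" and mer: "R meromorphic_on - {0}" and \<rho>: "0 < \<rho>"
  obtains y where "\<And>x. x \<noteq> 0 \<Longrightarrow> y (q * x) = y x + remove_sings R x"
    and "\<And>z. z \<noteq> 0 \<Longrightarrow> order_bounded_below y z (q_pole_bounds q R \<rho> z)"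
proof -
  obtain f g r C s D where
    f: "f meromorphic_on UNIV" and g: "g meromorphic_on - {0}" and fg: "\<And>x. f x + g x = remove_sings R x"
    and f_small: "0 < r" "f holomorphic_on ball 0 r" "\<And>x. norm x < r \<Longrightarrow> norm (f x - f 0) \<le> C * norm x"
    and g_large: "0 < s" "g holomorphic_on {x. s < norm x}" "\<And>x. s < norm x \<Longrightarrow> norm (g x) \<le> D / norm x"
    and f_pole: "\<And>w. is_pole f w \<Longrightarrow> w \<in> poles_gt R \<rho> \<and> zorder f w = zorder R w"
    and g_pole: "\<And>w. w \<noteq> 0 \<Longrightarrow> is_pole g w \<Longrightarrow> w \<in> poles_le R \<rho> \<and> zorder g w = zorder R w"
    by (rule meromorphic_annulus_split[OF mer \<rho>]) (rule that)
  define Y\<^sub>f where "Y\<^sub>f = (\<lambda>x. \<Sum>n. f (x / q ^ Suc n) - f 0)"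
  define Y\<^sub>g where "Y\<^sub>g = (\<lambda>x. \<Sum>n. g (q ^ n * x))"
  have Y\<^sub>f: "Y\<^sub>f (q * x) = Y\<^sub>f x + (f x - f 0)"
    "order_bounded_below Y\<^sub>f z {zorder f (z / q ^ Suc n) | n. is_pole f (z / q ^ Suc n)}" for x z
    unfolding Y\<^sub>f_def using q_difference_inner[OF q f f_small] by blast+
  have Y\<^sub>g: "Y\<^sub>g (q * x) = Y\<^sub>g x - g x" if "x \<noteq> 0" for x
    unfolding Y\<^sub>g_def using q_difference_outer[OF q g g_large] that by blast
  have Y\<^sub>g_bound: "order_bounded_below Y\<^sub>g z {zorder g (q ^ n * z) | n. is_pole g (q ^ n * z)}"
    if "z \<noteq> 0" for z
    unfolding Y\<^sub>g_def using q_difference_outer[OF q g g_large] that by blast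
  obtain u where u: "\<And>x. x \<noteq> 0 \<Longrightarrow> u (q * x) = u x + 1"
    "\<And>z. z \<noteq> 0 \<Longrightarrow> order_bounded_below u z {-1 | n::int. z = q powi n}"
    using q_difference_unit[OF q] by blast
  have "q \<noteq> 0"
    using q by auto
  show ?thesis
  proof (rule that[of "\<lambda>x. Y\<^sub>f x + (-1) * Y\<^sub>g x + f 0 * u x"])
    show "Y\<^sub>f (q * x) + (-1) * Y\<^sub>g (q * x) + f 0 * u (q * x) =
          Y\<^sub>f x + (-1) * Y\<^sub>g x + f 0 * u x + remove_sings R x" if "x \<noteq> 0" for x
      using that by (simp add: Y\<^sub>f(1) Y\<^sub>g u(1) flip: fg) (simp add: algebra_simps)
    fix z :: complex assume "z \<noteq> 0"
    have "{-1 | n::int. z = q powi n} \<subseteq> q_pole_bounds q R \<rho> z"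
      unfolding q_pole_bounds_def by (intro Un_upper1 subset_trans[OF _ Un_upper1])
    then have "order_bounded_below Y\<^sub>f z (q_pole_bounds q R \<rho> z)"
      "order_bounded_below Y\<^sub>g z (q_pole_bounds q R \<rho> z)"
      "order_bounded_below u z (q_pole_bounds q R \<rho> z)"
      using order_bounded_below_mono[OF Y\<^sub>f(2) q_pole_bounds_inner[OF \<open>q \<noteq> 0\<close> f_pole]]
        order_bounded_below_mono[OF Y\<^sub>g_bound q_pole_bounds_outer[OF \<open>q \<noteq> 0\<close> _ g_pole]]
        order_bounded_below_mono[OF u(2)] \<open>z \<noteq> 0\<close> by simp_all
    then show "order_bounded_below (\<lambda>x. Y\<^sub>f x + (-1) * Y\<^sub>g x + f 0 * u x) z (q_pole_bounds q R \<rho> z)"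
      by (intro order_bounded_below_add order_bounded_below_cmult)
  qed
qed

theorem proposition2p15:
  fixes q :: complex and R :: "complex \<Rightarrow> complex" and \<rho> :: real
  assumes "q \<noteq> 0" and "norm q > 1"
    and "R meromorphic_on (- {0})"
    and "\<rho> > 0"
  shows "\<exists>y. y meromorphic_on (- {0}) \<and>
           (\<forall>\<^sub>\<approx>x\<in>- {0}. y (q * x) = y x + R x) \<and>
           (\<forall>z. z \<noteq> 0 \<and> is_pole y z \<longrightarrow>
              ((\<exists>n::int. z = q powi n) \<and> pole_order y z \<le> 1)
              \<or> (\<exists>a\<in>poles_gt R \<rho>. (\<exists>n::nat. n \<ge> 1 \<and> z = a * q ^ n)
                                     \<and> pole_order y z \<le> pole_order R a)
              \<or> (\<exists>a\<in>poles_le R \<rho>. (\<exists>n::nat. z = a / q ^ n)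
                                     \<and> pole_order y z \<le> pole_order R a))"
proof -
  obtain y where eq: "\<And>x. x \<noteq> 0 \<Longrightarrow> y (q * x) = y x + remove_sings R x"
    and bound: "\<And>z. z \<noteq> 0 \<Longrightarrow> order_bounded_below y z (q_pole_bounds q R \<rho> z)"
    using q_difference_solution assms(2-4) by blast
    \<comment> \<open>the hypothesis \<open>q \<noteq> 0\<close> is implied by \<open>norm q > 1\<close> and not needed\<close>
  show ?thesis
  proof (intro exI[of _ y] conjI allI impI)
    show "y meromorphic_on - {0}"
      using bound order_bounded_below_imp_meromorphic meromorphic_on_meromorphic_at by blast
    have "\<forall>\<^sub>\<approx>x\<in>- {0}. x \<in> - {0::complex}"
      by (intro eventually_in_cosparse) auto
    with eventually_remove_sings_eq[OF assms(3)] show "\<forall>\<^sub>\<approx>x\<in>- {0}. y (q * x) = y x + R x"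
      by eventually_elim (use eq in auto)
    fix z assume "z \<noteq> 0 \<and> is_pole y z"
    then obtain v where "v \<in> q_pole_bounds q R \<rho> z" and v: "v \<le> zorder y z"
      using order_bounded_below_pole bound by blast
    then consider n :: int where "v = -1" "z = q powi n"
      | a n where "v = zorder R a" "a \<in> poles_gt R \<rho>" "1 \<le> n" "z = a * q ^ n"
      | a n where "v = zorder R a" "a \<in> poles_le R \<rho>" "z = a / q ^ n"
      unfolding q_pole_bounds_def by blast
    then show "((\<exists>n::int. z = q powi n) \<and> pole_order y z \<le> 1)
              \<or> (\<exists>a\<in>poles_gt R \<rho>. (\<exists>n::nat. n \<ge> 1 \<and> z = a * q ^ n)
                                     \<and> pole_order y z \<le> pole_order R a)
              \<or> (\<exists>a\<in>poles_le R \<rho>. (\<exists>n::nat. z = a / q ^ n)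
                                     \<and> pole_order y z \<le> pole_order R a)"
      using v by cases (auto simp: pole_order_def)
  qed
qed

end
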